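(* Assume $p$ is critical ($\mu=1$) and unbounded, and let $\sigma^2=\sum_k(k-1)^2p_k\in(0,\infty]$ be its variance (with the convention $2/\infty=0$). Then: (i) $\displaystyle\lim_{r\to\infty}\frac{q_r}{p_r}=\infty$, the limit taken along the infinite set $\{r:p_r>0\}$; (ii) for every integer $r\ge1$, $\displaystyle q_r\le\frac{p_r}{\sum_{i>r}ip_i}$; (iii) $\displaystyle\limsup_{r\to\infty}\frac{q_r^2}{p_r}\le\frac{2}{\sigma^2}$, the limsup taken along $\{r:p_r>0\}$; (iv) $\displaystyle\lim_{r\to\infty}\frac{\bar H(r)}{\bar F(r)}=\infty$; (v) for every integer $r\ge1$, $\displaystyle\bar H(r)\le\frac{\bar F(r)}{\sum_{i>r}ip_i}$; (vi) $\displaystyle\limsup_{r\to\infty}\frac{\bar H(r)^2}{\bar F(r)}\le\frac{2}{\sigma^2}$.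
   Context: Let $p=(p_0,p_1,p_2,\dots)$ be a probability distribution on the nonnegative integers with mean $\mu=\sum_k kp_k\in(0,\infty)$, and let $\tau(p)$ be a Galton–Watson tree with offspring distribution $p$: it starts with a single root at generation $0$, and every vertex independently has $k$ children with probability $p_k$. The out-degree of a vertex is its number of children. $M$ denotes the global maximal out-degree, i.e. the supremum of the out-degrees of all vertices of $\tau(p)$. $\bar F(r)=\sum_{k>r}p_k$, $H(r)=\mathbf{P}[M\le r]$, $\bar H(r)=1-H(r)$, and $q_r=\mathbf{P}[M=r]$. The distribution $p$ is called unbounded if the set $\{r:p_r>0\}$ is unbounded. *)

theory Defs
  imports "HOL-Probability.Probability"
begin

text \<open>Galton--Watson tree in the Ulam--Harris encoding. Vertices are lists of
naturals; the sample space assigns to every potential vertex u an independent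
number of children omega u with law p. The vertex u = [i1,...,in] belongs to
the tree iff for every j < n the j-th index is smaller than the number of
children of the prefix of length j.\<close>

definition GW_space :: "nat pmf \<Rightarrow> (nat list \<Rightarrow> nat) measure" where
  "GW_space p = (\<Pi>\<^sub>M u\<in>(UNIV :: nat list set). measure_pmf p)"

definition in_tree :: "(nat list \<Rightarrow> nat) \<Rightarrow> nat list \<Rightarrow> bool" where
  "in_tree \<omega> u \<longleftrightarrow> (\<forall>j < length u. u ! j < \<omega> (take j u))"

definition maxdeg :: "(nat list \<Rightarrow> nat) \<Rightarrow> enat" where
  "maxdeg \<omega> = (SUP u\<in>{u. in_tree \<omega> u}. enat (\<omega> u))"

definition GW_q :: "nat pmf \<Rightarrow> nat \<Rightarrow> real" where
  "GW_q p r = measure (GW_space p) {\<omega> \<in> space (GW_space p). maxdeg \<omega> = enat r}"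

definition GW_H :: "nat pmf \<Rightarrow> nat \<Rightarrow> real" where
  "GW_H p r = measure (GW_space p) {\<omega> \<in> space (GW_space p). maxdeg \<omega> \<le> enat r}"

definition GW_Hbar :: "nat pmf \<Rightarrow> nat \<Rightarrow> real" where
  "GW_Hbar p r = 1 - GW_H p r"

definition Fbar :: "nat pmf \<Rightarrow> nat \<Rightarrow> real" where
  "Fbar p r = (\<Sum>\<^sub>\<infinity>k\<in>{r<..}. pmf p k)"

text \<open>Variance of a critical law, in [0, \<infinity>] (extended reals).\<close>
definition variance_ext :: "nat pmf \<Rightarrow> ereal" where
  "variance_ext p = (\<Sum>k. ereal ((real k - 1)\<^sup>2 * pmf p k))"

end

theory Submission
  imports Defs
begin

text \<open>
  M \<le> r happens exactly when the root has k \<le> r children and each of its k independent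
  subtrees again has maximal out-degree at most r, so H(r) solves the truncated fixed-point
  equation H(r) = \<Sum>k\<le>r. p_k H(r)^k. Subtracting the equation for H(r - 1), resp. the identity
  1 = \<Sum>k. p_k, writes p_r H(r)^r and Fbar(r) in the common form (b - a) - \<Sum>k. p_k (b^k - a^k)
  with 0 \<le> a \<le> b \<le> 1, where b - a is q_r, resp. Hbar(r). The bounds
  k a^k (b - a) \<le> b^k - a^k \<le> k (b - a) and b^k - a^k \<le> k (b - a) - k (k - 1)/2 a^k (b - a)^2
  then give (ii)/(v), (i)/(iv) and (iii)/(vi). The limits need a \<rightarrow> 1 fast enough:
  by (v), r Hbar(r) \<le> r Fbar(r) / (\<Sum>i>r. i p_i) \<le> 1, so the truncated moments \<Sum>k. k p_k a^k and
  \<Sum>k. k (k - 1) p_k a^k approach 1 and \<sigma>^2.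
\<close>

section \<open>Elementary inequalities\<close>

lemma power_diff_le_mult_diff:
  fixes a b :: real
  assumes "0 \<le> a" "a \<le> b" "b \<le> 1"
  shows "b ^ k - a ^ k \<le> real k * (b - a)"
proof (induction k)
  case (Suc k)
  have "b ^ Suc k - a ^ Suc k = b * (b ^ k - a ^ k) + a ^ k * (b - a)"
    by (simp add: algebra_simps)
  also have "\<dots> \<le> (b ^ k - a ^ k) + (b - a)"
    using assms by (intro add_mono mult_left_le_one_le mult_left_le_one_le)
      (auto simp: power_mono power_le_one)
  finally show ?case using Suc by (simp add: algebra_simps)
qed simp

lemma mult_power_mult_diff_le_power_diff:
  fixes a b :: real
  assumes "0 \<le> a" "a \<le> b" "b \<le> 1"
  shows "real k * a ^ k * (b - a) \<le> b ^ k - a ^ k"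
proof (induction k)
  case (Suc k)
  have "a * (real k * a ^ k * (b - a)) \<le> b * (b ^ k - a ^ k)"
    using Suc assms by (intro mult_mono) (auto simp: power_mono)
  moreover have "a ^ Suc k * (b - a) \<le> a ^ k * (b - a)"
    using assms by (intro mult_right_mono) (auto intro!: mult_left_le_one_le)
  ultimately show ?case by (simp add: algebra_simps)
qed simp

lemma power_diff_second_order_bound:
  fixes a b :: real
  assumes "0 \<le> a" "a \<le> b" "b \<le> 1"
  shows "real k * (real k - 1) / 2 * a ^ k * (b - a)\<^sup>2 \<le> real k * (b - a) - (b ^ k - a ^ k)"
proof (induction k)
  case (Suc k)
  define d where "d = b - a"
  have d: "0 \<le> d" "d \<le> 1 - a" using assms by (auto simp: d_def)
  have k: "0 \<le> real k * (real k - 1) / 2"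
    by (cases k) auto
  have a_pow: "a ^ Suc k \<le> a ^ k"
    using assms by (auto intro!: mult_left_le_one_le)
  have "real k * a ^ k * d \<le> real k * a ^ k * (1 - a)"
    using d assms by (intro mult_left_mono) auto
  also have "\<dots> \<le> 1 - a ^ k"
    using mult_power_mult_diff_le_power_diff[of a 1 k] assms by simp
  finally have first_order: "real k * a ^ k * d \<le> 1 - a ^ k" .
  have "real (Suc k) * (real (Suc k) - 1) / 2 * a ^ Suc k * d\<^sup>2
      = real k * (real k - 1) / 2 * a ^ Suc k * d\<^sup>2 + d * (real k * a ^ Suc k * d)"
    by (simp add: power2_eq_square field_simps)
  also have "\<dots> \<le> real k * (real k - 1) / 2 * a ^ k * d\<^sup>2 + d * (real k * a ^ k * d)"
    using a_pow k d by (intro add_mono mult_left_mono mult_right_mono) auto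
  also have "\<dots> \<le> (real k * d - (b ^ k - a ^ k)) + d * (1 - a ^ k)"
    using Suc first_order d unfolding d_def[symmetric] by (intro add_mono mult_left_mono)
  also have "\<dots> \<le> real (Suc k) * d - (b ^ Suc k - a ^ Suc k)"
  proof -
    have "0 \<le> (1 - b) * (b ^ k - a ^ k)"
      using assms by (simp add: power_mono)
    then show ?thesis by (simp add: d_def algebra_simps)
  qed
  finally show ?case by (simp add: d_def)
qed simp

lemma power_sum_diff_lower_bound:
  fixes a b :: real and P :: "nat \<Rightarrow> real"
  assumes "0 \<le> a" "a \<le> b" "b \<le> 1" "\<And>k. 0 \<le> P k"
  shows "(b - a) * (1 - (\<Sum>k<n. real k * P k)) \<le> (b - a) - (\<Sum>k<n. P k * (b ^ k - a ^ k))"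
proof -
  have "(\<Sum>k<n. P k * (b ^ k - a ^ k)) \<le> (\<Sum>k<n. P k * (real k * (b - a)))"
    using assms power_diff_le_mult_diff by (intro sum_mono mult_left_mono) auto
  then show ?thesis by (simp add: sum_distrib_left sum_distrib_right algebra_simps)
qed

lemma power_sum_diff_upper_bound:
  fixes a b :: real and P :: "nat \<Rightarrow> real"
  assumes "0 \<le> a" "a \<le> b" "b \<le> 1" "\<And>k. 0 \<le> P k"
  shows "(b - a) - (\<Sum>k<n. P k * (b ^ k - a ^ k)) \<le> (b - a) * (1 - (\<Sum>k<n. real k * P k * a ^ k))"
proof -
  have "(\<Sum>k<n. P k * (real k * a ^ k * (b - a))) \<le> (\<Sum>k<n. P k * (b ^ k - a ^ k))"
    using assms mult_power_mult_diff_le_power_diff by (intro sum_mono mult_left_mono) auto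
  then show ?thesis by (simp add: sum_distrib_left sum_distrib_right algebra_simps)
qed

lemma power_sum_diff_second_order_bound:
  fixes a b :: real and P :: "nat \<Rightarrow> real"
  assumes "0 \<le> a" "a \<le> b" "b \<le> 1" "\<And>k. 0 \<le> P k" "(\<Sum>k<n. real k * P k) \<le> 1"
  shows "(b - a)\<^sup>2 / 2 * (\<Sum>k<n. real k * (real k - 1) * P k * a ^ k)
    \<le> (b - a) - (\<Sum>k<n. P k * (b ^ k - a ^ k))"
proof -
  have "(b - a)\<^sup>2 / 2 * (\<Sum>k<n. real k * (real k - 1) * P k * a ^ k)
      = (\<Sum>k<n. P k * (real k * (real k - 1) / 2 * a ^ k * (b - a)\<^sup>2))"
    by (simp add: sum_distrib_left mult.commute mult.left_commute)
  also have "\<dots> \<le> (\<Sum>k<n. P k * (real k * (b - a) - (b ^ k - a ^ k)))"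
    using assms power_diff_second_order_bound by (intro sum_mono mult_left_mono) auto
  also have "\<dots> = (b - a) * (\<Sum>k<n. real k * P k) - (\<Sum>k<n. P k * (b ^ k - a ^ k))"
    by (simp add: sum_distrib_left sum_subtractf[symmetric] algebra_simps)
  also have "\<dots> \<le> (b - a) - (\<Sum>k<n. P k * (b ^ k - a ^ k))"
    using assms mult_left_mono[of "\<Sum>k<n. real k * P k" 1 "b - a"] by simp
  finally show ?thesis .
qed

lemma exp_minus_two_le_power:
  fixes x :: real
  assumes "0 \<le> x" "real r * x \<le> 1" "2 \<le> r"
  shows "exp (-2) \<le> (1 - x) ^ r"
proof -
  have x: "x \<le> 1/2"
    using assms mult_right_mono[of 2 "real r" x] by simp
  have "real r * x\<^sup>2 \<le> 1 * (1/2)"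
    unfolding power2_eq_square mult.assoc[symmetric] using assms x by (intro mult_mono) auto
  then have "-2 \<le> real r * (- x - 2 * x\<^sup>2)" using assms by (simp add: algebra_simps)
  also have "\<dots> \<le> real r * ln (1 - x)"
    using ln_one_minus_pos_lower_bound[of x] assms x by (intro mult_left_mono) auto
  finally have "exp (-2) \<le> exp (real r * ln (1 - x))" by simp
  also have "\<dots> = (1 - x) ^ r" using x by (simp add: exp_of_nat_mult)
  finally show ?thesis .
qed

lemma square_divide_le_two_divide:
  fixes c V X d :: real
  assumes "0 < c" "c \<le> V" "0 < X" "d\<^sup>2 / 2 * V \<le> X"
  shows "d\<^sup>2 / X \<le> 2 / c"
proof -
  have "d\<^sup>2 / 2 * c \<le> d\<^sup>2 / 2 * V" using assms by (intro mult_left_mono) auto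
  with assms show ?thesis by (simp add: field_simps)
qed

lemma ereal_le_two_divide_if_below:
  fixes L \<sigma> :: ereal
  assumes "0 \<le> \<sigma>" and below: "\<And>c. 0 < c \<Longrightarrow> ereal c < \<sigma> \<Longrightarrow> L \<le> ereal (2 / c)"
  shows "L \<le> 2 / \<sigma>"
proof (cases \<sigma>)
  case PInf
  have "L \<le> 0 + ereal e" if "0 < e" for e :: real
    using below[of "2 / e"] that PInf by simp
  then have "L \<le> 0" by (rule ereal_le_epsilon2)
  then show ?thesis using PInf by simp
next
  case (real s)
  show ?thesis
  proof (cases "s = 0")
    case False
    with real assms(1) have s: "0 < s" by simp
    have "L \<le> ereal (2 / s) + ereal e" if e: "0 < e" for e :: real
    proof -
      define c where "c = 2 / (2 / s + e)"
      have "0 < 2 / s + e" using s e by (simp add: add_pos_pos)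
      then have "0 < c" "c < s" "2 / c = 2 / s + e"
        using s e by (auto simp: c_def field_simps)
      then show ?thesis using below[of c] real by simp
    qed
    then have "L \<le> ereal (2 / s)" by (rule ereal_le_epsilon2)
    then show ?thesis using real False by (simp add: ereal_divide)
  qed (simp add: real ereal_divide)
qed (use assms(1) in simp)

lemma sum_lessThan_Suc_add_le:
  fixes f :: "nat \<Rightarrow> real"
  assumes "\<And>k. 0 \<le> f k" "r < i"
  shows "(\<Sum>k<Suc r. f k) + f i \<le> (\<Sum>k<Suc i. f k)"
proof -
  have "(\<Sum>k<Suc r. f k) + f i = (\<Sum>k\<in>insert i {..<Suc r}. f k)"
    using assms(2) by simp
  also have "\<dots> \<le> (\<Sum>k<Suc i. f k)"
    using assms by (intro sum_mono2) auto
  finally show ?thesis .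
qed

lemma sum_lessThan_le_1_of_sums:
  fixes P :: "nat \<Rightarrow> real"
  assumes "P sums 1" "\<And>k. 0 \<le> P k"
  shows "(\<Sum>k<n. P k) \<le> 1"
  using sum_le_suminf[of P "{..<n}"] assms by (auto simp: sums_iff)

lemma eventually_less_truncated_power_sum:
  fixes w :: "nat \<Rightarrow> real" and a :: "'a \<Rightarrow> real"
  assumes "\<And>k. 0 \<le> w k" "c < (\<Sum>k<K. w k)"
    and "filterlim n at_top F" "(a \<longlongrightarrow> 1) F" "eventually (\<lambda>x. 0 \<le> a x) F"
  shows "eventually (\<lambda>x. c < (\<Sum>k<n x. w k * a x ^ k)) F"
proof -
  have "((\<lambda>x. \<Sum>k<K. w k * a x ^ k) \<longlongrightarrow> (\<Sum>k<K. w k * 1 ^ k)) F"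
    using assms(4) by (intro tendsto_intros)
  then have "eventually (\<lambda>x. c < (\<Sum>k<K. w k * a x ^ k)) F"
    using assms(2) by (intro order_tendstoD) simp_all
  moreover have "eventually (\<lambda>x. K \<le> n x) F"
    using assms(3) by (simp add: filterlim_at_top)
  ultimately show ?thesis using assms(5)
  proof eventually_elim
    case (elim x)
    then have "(\<Sum>k<K. w k * a x ^ k) \<le> (\<Sum>k<n x. w k * a x ^ k)"
      using assms(1) by (intro sum_mono2) auto
    with elim show ?case by linarith
  qed
qed

section \<open>The offspring law\<close>

lemma sum_pmf_lessThan_le_1:
  fixes p :: "nat pmf"
  shows "(\<Sum>k<n. pmf p k) \<le> 1"
proof -
  have "(\<Sum>k<n. pmf p k) = measure (measure_pmf p) {..<n}"
    by (rule measure_measure_pmf_finite[symmetric]) simp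
  then show ?thesis by simp
qed

lemma infsum_pmf_UNIV: "infsum (pmf p) UNIV = 1"
  using infsetsum_infsum[OF pmf_abs_summable, of p UNIV] infsetsum_pmf_eq_1[of p UNIV] by simp

lemma summable_on_pmf: "pmf p summable_on A"
proof -
  have "pmf p summable_on UNIV"
    using infsum_pmf_UNIV[of p] infsum_not_exists by fastforce
  then show ?thesis by (rule summable_on_subset_banach) simp
qed

lemma Fbar_eq: "Fbar p r = 1 - (\<Sum>k<Suc r. pmf p k)"
proof -
  have "Fbar p r = infsum (pmf p) (UNIV - {..r})"
    unfolding Fbar_def by (rule arg_cong[where f = "infsum (pmf p)"]) auto
  also have "\<dots> = infsum (pmf p) UNIV - infsum (pmf p) {..r}"
    by (rule infsum_Diff[OF summable_on_pmf]) auto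
  finally show ?thesis by (simp add: infsum_pmf_UNIV lessThan_Suc_atMost)
qed

lemma Fbar_pos:
  assumes "infinite {r. pmf p r > 0}"
  shows "0 < Fbar p r"
proof -
  obtain i where i: "r < i" "0 < pmf p i"
    using assms unfolding infinite_nat_iff_unbounded by auto
  with sum_lessThan_Suc_add_le[of "pmf p" r i] sum_pmf_lessThan_le_1[of p "Suc i"]
  show ?thesis by (simp add: Fbar_eq)
qed

lemma tail_mean_eq:
  assumes crit: "(\<lambda>k. real k * pmf p k) sums 1"
  shows "(\<Sum>\<^sub>\<infinity>i\<in>{r<..}. real i * pmf p i) = 1 - (\<Sum>k<Suc r. real k * pmf p k)"
proof -
  have has_sum: "((\<lambda>k. real k * pmf p k) has_sum 1) UNIV"
    using crit by (intro sums_nonneg_imp_has_sum) auto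
  have "(\<Sum>\<^sub>\<infinity>i\<in>{r<..}. real i * pmf p i) = (\<Sum>\<^sub>\<infinity>i\<in>UNIV - {..r}. real i * pmf p i)"
    by (rule arg_cong[where f = "infsum _"]) auto
  also have "\<dots> = (\<Sum>\<^sub>\<infinity>i\<in>UNIV. real i * pmf p i) - (\<Sum>\<^sub>\<infinity>i\<in>{..r}. real i * pmf p i)"
    using has_sum by (intro infsum_Diff) (auto dest: has_sum_imp_summable)
  finally show ?thesis using infsumI[OF has_sum] by (simp add: lessThan_Suc_atMost)
qed

lemma tail_mean_pos:
  assumes crit: "(\<lambda>k. real k * pmf p k) sums 1" and "infinite {r. pmf p r > 0}"
  shows "0 < (\<Sum>\<^sub>\<infinity>i\<in>{r<..}. real i * pmf p i)"
proof -
  obtain i where i: "r < i" "0 < pmf p i"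
    using assms(2) unfolding infinite_nat_iff_unbounded by auto
  have "(\<Sum>k<Suc r. real k * pmf p k) + real i * pmf p i \<le> (\<Sum>k<Suc i. real k * pmf p k)"
    using i by (intro sum_lessThan_Suc_add_le) auto
  moreover have "(\<Sum>k<Suc i. real k * pmf p k) \<le> 1"
    using crit by (rule sum_lessThan_le_1_of_sums) simp
  moreover have "0 < real i * pmf p i"
    using i by simp
  ultimately show ?thesis
    by (simp add: tail_mean_eq[OF crit] del: sum.lessThan_Suc)
qed

lemma real_mult_Fbar_le_tail_mean:
  assumes crit: "(\<lambda>k. real k * pmf p k) sums 1"
  shows "real r * Fbar p r \<le> (\<Sum>\<^sub>\<infinity>i\<in>{r<..}. real i * pmf p i)"
proof -
  have "((\<lambda>k. real k * pmf p k) has_sum 1) UNIV"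
    using crit by (intro sums_nonneg_imp_has_sum) auto
  then have "(\<lambda>k. real k * pmf p k) summable_on {r<..}"
    by (rule summable_on_subset_banach[OF has_sum_imp_summable]) simp
  then have "(\<Sum>\<^sub>\<infinity>i\<in>{r<..}. real r * pmf p i) \<le> (\<Sum>\<^sub>\<infinity>i\<in>{r<..}. real i * pmf p i)"
    by (rule infsum_mono[OF summable_on_cmult_right[OF summable_on_pmf]])
      (simp add: mult_right_mono)
  then show ?thesis by (simp add: Fbar_def infsum_cmult_right')
qed

lemma eventually_less_truncated_mean:
  assumes crit: "(\<lambda>k. real k * pmf p k) sums 1" and "c < 1"
    and "filterlim n at_top F" "(a \<longlongrightarrow> 1) F" "eventually (\<lambda>x. 0 \<le> a x) F"
  shows "eventually (\<lambda>x. c < (\<Sum>k<n x. real k * pmf p k * a x ^ k)) F"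
proof -
  have "eventually (\<lambda>K. c < (\<Sum>k<K. real k * pmf p k)) sequentially"
    using crit \<open>c < 1\<close> by (intro order_tendstoD) (simp_all add: sums_def)
  then obtain K where "c < (\<Sum>k<K. real k * pmf p k)"
    by (auto simp: eventually_sequentially)
  then show ?thesis
    using assms(3-) by (intro eventually_less_truncated_power_sum) auto
qed

lemma variance_ext_nonneg: "0 \<le> variance_ext p"
  unfolding variance_ext_def by (intro suminf_0_le) auto

lemma less_variance_ext_imp_less_factorial_moment:
  assumes crit: "(\<lambda>k. real k * pmf p k) sums 1" and "ereal c < variance_ext p"
  obtains K where "c < (\<Sum>k<K. real k * (real k - 1) * pmf p k)"
proof -
  have "variance_ext p = (SUP n. \<Sum>k<n. ereal ((real k - 1)\<^sup>2 * pmf p k))"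
    unfolding variance_ext_def by (intro suminf_ereal_eq_SUP) auto
  with assms(2) obtain K0 where K0: "c < (\<Sum>k<K0. (real k - 1)\<^sup>2 * pmf p k)"
    by (auto simp: less_SUP_iff)
  define \<eta> where "\<eta> = (\<Sum>k<K0. (real k - 1)\<^sup>2 * pmf p k) - c"
  have "0 < \<eta>" using K0 by (simp add: \<eta>_def)
  then have "eventually (\<lambda>K. 1 - \<eta> < (\<Sum>k<K. real k * pmf p k)) sequentially"
    using crit by (intro order_tendstoD) (auto simp: sums_def)
  then obtain N where "\<And>K. N \<le> K \<Longrightarrow> 1 - \<eta> < (\<Sum>k<K. real k * pmf p k)"
    by (auto simp: eventually_sequentially)
  then obtain K where K: "K0 \<le> K" "1 - \<eta> < (\<Sum>k<K. real k * pmf p k)"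
    using max.cobounded1 max.cobounded2 by blast
  have "(\<Sum>k<K0. (real k - 1)\<^sup>2 * pmf p k) \<le> (\<Sum>k<K. (real k - 1)\<^sup>2 * pmf p k)"
    using K by (intro sum_mono2) auto
  moreover have "(\<Sum>k<K. (real k - 1)\<^sup>2 * pmf p k)
      = (\<Sum>k<K. real k * (real k - 1) * pmf p k) - (\<Sum>k<K. real k * pmf p k) + (\<Sum>k<K. pmf p k)"
    by (simp add: sum_subtractf[symmetric] sum.distrib[symmetric] power2_eq_square algebra_simps)
  ultimately have "c < (\<Sum>k<K. real k * (real k - 1) * pmf p k)"
    using K sum_pmf_lessThan_le_1[of p K] by (simp add: \<eta>_def)
  then show ?thesis by (rule that)
qed

lemma eventually_less_truncated_factorial_moment:
  assumes crit: "(\<lambda>k. real k * pmf p k) sums 1" and "ereal c < variance_ext p"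
    and "filterlim n at_top F" "(a \<longlongrightarrow> 1) F" "eventually (\<lambda>x. 0 \<le> a x) F"
  shows "eventually (\<lambda>x. c < (\<Sum>k<n x. real k * (real k - 1) * pmf p k * a x ^ k)) F"
proof -
  obtain K where "c < (\<Sum>k<K. real k * (real k - 1) * pmf p k)"
    using less_variance_ext_imp_less_factorial_moment[OF assms(1,2)] .
  moreover have "0 \<le> real k * (real k - 1) * pmf p k" for k
    by (cases k) auto
  ultimately show ?thesis
    using assms(3-) by (intro eventually_less_truncated_power_sum) auto
qed

section \<open>The Galton--Watson measure and the fixed-point equation of H\<close>

definition subtree :: "nat \<Rightarrow> (nat list \<Rightarrow> nat) \<Rightarrow> nat list \<Rightarrow> nat" where
  "subtree i \<omega> v = \<omega> (i # v)"

lemma space_GW_space [simp]: "space (GW_space p) = UNIV"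
  by (simp add: GW_space_def space_PiM PiE_def extensional_def)

lemma prob_space_GW_space: "prob_space (GW_space p)"
  unfolding GW_space_def by (intro prob_space_PiM) (simp add: prob_space_measure_pmf)

lemma measurable_GW_coordinate: "(\<lambda>\<omega>. \<omega> u) \<in> measurable (GW_space p) (measure_pmf p)"
  unfolding GW_space_def by (rule measurable_component_singleton) simp

lemma distr_GW_coordinate: "distr (GW_space p) (measure_pmf p) (\<lambda>\<omega>. \<omega> u) = measure_pmf p"
proof -
  interpret product_prob_space "\<lambda>_. measure_pmf p" "UNIV :: nat list set"
    by unfold_locales
  show ?thesis unfolding GW_space_def by (rule PiM_component) simp
qed

lemma measurable_subtree: "subtree i \<in> measurable (GW_space p) (GW_space p)"
proof -
  have "(\<lambda>\<omega>. \<lambda>v\<in>UNIV. \<omega> (i # v)) \<in> measurable (GW_space p) (GW_space p)"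
    unfolding GW_space_def by (intro measurable_restrict measurable_component_singleton) auto
  then show ?thesis by (simp add: subtree_def[abs_def] restrict_UNIV)
qed

lemma distr_subtree: "distr (GW_space p) (GW_space p) (subtree i) = GW_space p"
  using distr_PiM_reindex[where f = "Cons i" and I = UNIV and K = UNIV and M = "\<lambda>_. measure_pmf p"]
  by (simp add: GW_space_def subtree_def[abs_def] restrict_UNIV prob_space_measure_pmf)

lemma indep_vars_GW_coordinates:
  "prob_space.indep_vars (GW_space p) (\<lambda>_. measure_pmf p) (\<lambda>u \<omega>. \<omega> u) UNIV"
proof -
  interpret prob_space "GW_space p" by (rule prob_space_GW_space)
  show ?thesis
    by (subst indep_vars_iff_distr_eq_PiM)
       (simp_all only: measurable_GW_coordinate distr_GW_coordinate restrict_UNIV distr_id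
         GW_space_def[symmetric] UNIV_not_empty not_False_eq_True)
qed

text \<open>The root enters as the restriction of \<omega> to {[]}, so that all members of the family
  are random variables of the same type.\<close>

lemma indep_vars_root_subtrees:
  "prob_space.indep_vars (GW_space p)
     (\<lambda>j. case j of None \<Rightarrow> PiM {[]} (\<lambda>_. measure_pmf p) | Some _ \<Rightarrow> GW_space p)
     (\<lambda>j \<omega>. case j of None \<Rightarrow> restrict \<omega> {[]} | Some i \<Rightarrow> subtree i \<omega>) UNIV"
proof -
  interpret prob_space "GW_space p" by (rule prob_space_GW_space)
  define K where "K j = (case j of None \<Rightarrow> {[]} | Some i \<Rightarrow> range (Cons i))" for j :: "nat option"
  define Y :: "nat option \<Rightarrow> (nat list \<Rightarrow> nat) \<Rightarrow> nat list \<Rightarrow> nat"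
    where "Y j = (case j of None \<Rightarrow> (\<lambda>f. f) | Some i \<Rightarrow> subtree i)" for j
  have "indep_vars (\<lambda>j. PiM (K j) (\<lambda>_. measure_pmf p)) (\<lambda>j \<omega>. restrict (\<lambda>u. \<omega> u) (K j)) UNIV"
    by (rule indep_vars_restrict[OF indep_vars_GW_coordinates])
       (auto simp: disjoint_family_on_def K_def split: option.splits)
  then have "indep_vars (\<lambda>j. case j of None \<Rightarrow> PiM {[]} (\<lambda>_. measure_pmf p) | Some _ \<Rightarrow> GW_space p)
      (\<lambda>j \<omega>. Y j (restrict (\<lambda>u. \<omega> u) (K j))) UNIV"
  proof (rule indep_vars_compose2)
    fix j :: "nat option"
    show "Y j \<in> measurable (PiM (K j) (\<lambda>_. measure_pmf p))
        (case j of None \<Rightarrow> PiM {[]} (\<lambda>_. measure_pmf p) | Some _ \<Rightarrow> GW_space p)"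
    proof (cases j)
      case (Some i)
      have "(\<lambda>f. \<lambda>v\<in>UNIV. f (i # v)) \<in> measurable (PiM (range (Cons i)) (\<lambda>_. measure_pmf p)) (GW_space p)"
        unfolding GW_space_def by (intro measurable_restrict measurable_component_singleton) auto
      then show ?thesis using Some by (simp add: Y_def K_def subtree_def[abs_def] restrict_UNIV)
    qed (simp add: Y_def K_def)
  qed
  moreover have "Y j (restrict \<omega> (K j)) = (case j of None \<Rightarrow> restrict \<omega> {[]} | Some i \<Rightarrow> subtree i \<omega>)" for j \<omega>
    by (cases j) (auto simp: Y_def K_def subtree_def fun_eq_iff)
  ultimately show ?thesis by simp
qed

lemma measure_root_subtrees:
  assumes E: "E \<in> sets (GW_space p)"
  shows "measure (GW_space p) {\<omega>. \<omega> [] = k \<and> (\<forall>i<k. subtree i \<omega> \<in> E)}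
    = pmf p k * measure (GW_space p) E ^ k"
proof -
  interpret prob_space "GW_space p" by (rule prob_space_GW_space)
  let ?R = "PiM {[]} (\<lambda>_::nat list. measure_pmf p)"
  define X where "X j \<omega> = (case j of None \<Rightarrow> restrict \<omega> {[]} | Some i \<Rightarrow> subtree i \<omega>)" for j \<omega>
  define A where "A j = (case j of None \<Rightarrow> (\<lambda>f. f []) -` {k} \<inter> space ?R | Some _ \<Rightarrow> E)"
    for j :: "nat option"
  define J where "J = insert None (Some ` {..<k})"
  have root: "prob (X None -` A None \<inter> space (GW_space p)) = pmf p k"
  proof -
    have "X None -` A None \<inter> space (GW_space p) = (\<lambda>\<omega>. \<omega> []) -` {k} \<inter> space (GW_space p)"
      by (auto simp: X_def A_def space_PiM)
    also have "prob \<dots> = measure (distr (GW_space p) (measure_pmf p) (\<lambda>\<omega>. \<omega> [])) {k}"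
      by (rule measure_distr[OF measurable_GW_coordinate, symmetric]) simp
    finally show ?thesis by (simp add: distr_GW_coordinate measure_pmf_single)
  qed
  have subtree: "prob (X (Some i) -` A (Some i) \<inter> space (GW_space p)) = prob E" for i
  proof -
    have "prob (X (Some i) -` A (Some i) \<inter> space (GW_space p))
        = measure (distr (GW_space p) (GW_space p) (subtree i)) E"
      by (simp add: X_def[abs_def] A_def measure_distr[OF measurable_subtree E])
    then show ?thesis by (simp add: distr_subtree)
  qed
  have "{\<omega>. \<omega> [] = k \<and> (\<forall>i<k. subtree i \<omega> \<in> E)} = (\<Inter>j\<in>J. X j -` A j \<inter> space (GW_space p))"
    by (auto simp: J_def X_def A_def space_PiM)
  moreover have "prob (\<Inter>j\<in>J. X j -` A j \<inter> space (GW_space p))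
      = (\<Prod>j\<in>J. prob (X j -` A j \<inter> space (GW_space p)))"
  proof (rule indep_varsD[OF indep_vars_root_subtrees[folded X_def]])
    show "A j \<in> sets (case j of None \<Rightarrow> ?R | Some _ \<Rightarrow> GW_space p)" for j
      using E measurable_sets[OF measurable_component_singleton[of "[]" "{[]}"], of "{k}"]
      by (cases j) (auto simp: A_def)
  qed (auto simp: J_def)
  ultimately show ?thesis
    using root subtree by (simp add: J_def prod.reindex)
qed

definition degree_bounded :: "nat \<Rightarrow> (nat list \<Rightarrow> nat) set" where
  "degree_bounded r = {\<omega>. \<forall>u. in_tree \<omega> u \<longrightarrow> \<omega> u \<le> r}"

lemma maxdeg_le_iff: "maxdeg \<omega> \<le> enat r \<longleftrightarrow> \<omega> \<in> degree_bounded r"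
  by (auto simp: maxdeg_def degree_bounded_def SUP_le_iff)

lemma pred_GW_coordinate: "Measurable.pred (GW_space p) (\<lambda>\<omega>. P (\<omega> u))"
  using measurable_compose[OF measurable_GW_coordinate, of "\<lambda>x. P x"] by simp

lemma pred_in_tree: "Measurable.pred (GW_space p) (\<lambda>\<omega>. in_tree \<omega> u)"
proof -
  have "(\<lambda>\<omega>. in_tree \<omega> u) = (\<lambda>\<omega>. \<forall>j\<in>{..<length u}. u ! j < \<omega> (take j u))"
    by (auto simp: in_tree_def fun_eq_iff)
  then show ?thesis by (simp only:) (intro pred_intros_finite pred_GW_coordinate; simp)
qed

lemma sets_degree_bounded: "degree_bounded r \<in> sets (GW_space p)"
proof -
  have "Measurable.pred (GW_space p) (\<lambda>\<omega>. \<forall>u. in_tree \<omega> u \<longrightarrow> \<omega> u \<le> r)"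
    by (intro pred_intros_countable pred_intros_logic pred_in_tree pred_GW_coordinate)
  then show ?thesis by (simp add: pred_def degree_bounded_def)
qed

lemma GW_H_eq_measure_degree_bounded: "GW_H p r = measure (GW_space p) (degree_bounded r)"
  by (simp add: GW_H_def maxdeg_le_iff)

lemma in_tree_Cons: "in_tree \<omega> (i # v) \<longleftrightarrow> i < \<omega> [] \<and> in_tree (subtree i \<omega>) v"
  by (simp add: in_tree_def subtree_def All_less_Suc2)

lemma degree_bounded_iff_subtrees:
  "\<omega> \<in> degree_bounded r \<longleftrightarrow> \<omega> [] \<le> r \<and> (\<forall>i<\<omega> []. subtree i \<omega> \<in> degree_bounded r)"
proof
  assume "\<omega> \<in> degree_bounded r"
  then show "\<omega> [] \<le> r \<and> (\<forall>i<\<omega> []. subtree i \<omega> \<in> degree_bounded r)"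
    by (auto simp: degree_bounded_def in_tree_Cons subtree_def in_tree_def[of _ "[]"])
next
  assume subtrees: "\<omega> [] \<le> r \<and> (\<forall>i<\<omega> []. subtree i \<omega> \<in> degree_bounded r)"
  show "\<omega> \<in> degree_bounded r"
    unfolding degree_bounded_def
  proof (intro CollectI allI impI)
    fix u assume "in_tree \<omega> u"
    with subtrees show "\<omega> u \<le> r"
      by (cases u) (auto simp: in_tree_Cons degree_bounded_def subtree_def)
  qed
qed

lemma GW_H_fixpoint: "GW_H p r = (\<Sum>k\<le>r. pmf p k * GW_H p r ^ k)"
proof -
  interpret prob_space "GW_space p" by (rule prob_space_GW_space)
  define B where "B k = {\<omega>. \<omega> [] = k \<and> (\<forall>i<k. subtree i \<omega> \<in> degree_bounded r)}" for k
  have "B k = (\<lambda>\<omega>. \<omega> []) -` {k} \<inter> (\<Inter>i\<in>{..<k}. subtree i -` degree_bounded r) \<inter> space (GW_space p)"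
    for k by (auto simp: B_def)
  moreover have "subtree i -` degree_bounded r \<inter> space (GW_space p) \<in> events" for i
    by (rule measurable_sets[OF measurable_subtree sets_degree_bounded])
  moreover have "(\<lambda>\<omega>. \<omega> []) -` {k} \<inter> space (GW_space p) \<in> events" for k
    by (rule measurable_sets[OF measurable_GW_coordinate]) simp
  ultimately have B_sets: "B k \<in> events" for k
    by (auto intro!: sets.Int sets.finite_INT)
  have "\<omega> \<in> degree_bounded r \<longleftrightarrow> \<omega> \<in> (\<Union>k\<le>r. B k)" for \<omega>
    by (subst degree_bounded_iff_subtrees) (auto simp: B_def)
  then have "prob (degree_bounded r) = prob (\<Union>k\<le>r. B k)" by (metis set_eqI)
  also have "\<dots> = (\<Sum>k\<le>r. prob (B k))"
    using B_sets by (intro finite_measure_finite_Union) (auto simp: disjoint_family_on_def B_def)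
  also have "\<dots> = (\<Sum>k\<le>r. pmf p k * prob (degree_bounded r) ^ k)"
    unfolding B_def by (simp add: measure_root_subtrees[OF sets_degree_bounded])
  finally show ?thesis by (simp add: GW_H_eq_measure_degree_bounded)
qed

section \<open>Non-asymptotic bounds\<close>

lemma GW_H_nonneg: "0 \<le> GW_H p r"
  by (simp add: GW_H_def)

lemma GW_H_le_1: "GW_H p r \<le> 1"
  using prob_space.prob_le_1[OF prob_space_GW_space] by (simp add: GW_H_def)

lemma GW_q_nonneg: "0 \<le> GW_q p r"
  by (simp add: GW_q_def)

lemma GW_q_eq_diff:
  assumes "1 \<le> r"
  shows "GW_q p r = GW_H p r - GW_H p (r - 1)"
proof -
  interpret prob_space "GW_space p" by (rule prob_space_GW_space)
  have "maxdeg \<omega> = enat r \<longleftrightarrow> maxdeg \<omega> \<le> enat r \<and> \<not> maxdeg \<omega> \<le> enat (r - 1)" for \<omega>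
    using assms by (cases "maxdeg \<omega>") auto
  then have "{\<omega> \<in> space (GW_space p). maxdeg \<omega> = enat r} = degree_bounded r - degree_bounded (r - 1)"
    by (auto simp: maxdeg_le_iff)
  moreover have "degree_bounded (r - 1) \<subseteq> degree_bounded r"
    by (auto simp: degree_bounded_def)
  ultimately show ?thesis
    by (simp add: GW_q_def GW_H_eq_measure_degree_bounded finite_measure_Diff sets_degree_bounded)
qed

lemma GW_H_pred_le: "GW_H p (r - 1) \<le> GW_H p r"
proof (cases "r = 0")
  case False
  with GW_q_nonneg[of p r] show ?thesis using GW_q_eq_diff[of r p] by simp
qed simp

lemma GW_q_fixpoint_gap:
  assumes "1 \<le> r"
  shows "GW_q p r - (\<Sum>k<r. pmf p k * (GW_H p r ^ k - GW_H p (r - 1) ^ k)) = pmf p r * GW_H p r ^ r"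
proof -
  have "{..r - 1} = {..<r}" using assms by auto
  then have "GW_H p (r - 1) = (\<Sum>k<r. pmf p k * GW_H p (r - 1) ^ k)"
    using GW_H_fixpoint[of p "r - 1"] by simp
  moreover have "GW_H p r = (\<Sum>k<r. pmf p k * GW_H p r ^ k) + pmf p r * GW_H p r ^ r"
    using GW_H_fixpoint[of p r] by (simp add: lessThan_Suc_atMost[symmetric])
  ultimately show ?thesis
    by (simp add: GW_q_eq_diff[OF assms] right_diff_distrib sum_subtractf)
qed

lemma GW_Hbar_fixpoint_gap:
  "GW_Hbar p r - (\<Sum>k<Suc r. pmf p k * (1 - GW_H p r ^ k)) = Fbar p r"
  using GW_H_fixpoint[of p r]
  by (simp add: GW_Hbar_def Fbar_eq right_diff_distrib sum_subtractf lessThan_Suc_atMost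
      del: sum.lessThan_Suc)

lemma GW_q_le_pmf_div_tail_mean:
  assumes crit: "(\<lambda>k. real k * pmf p k) sums 1" and unb: "infinite {r. pmf p r > 0}"
    and "1 \<le> r"
  shows "GW_q p r \<le> pmf p r / (\<Sum>\<^sub>\<infinity>i\<in>{r<..}. real i * pmf p i)"
proof -
  let ?S = "\<Sum>\<^sub>\<infinity>i\<in>{r<..}. real i * pmf p i"
  have "?S \<le> 1 - (\<Sum>k<r. real k * pmf p k)"
    by (simp add: tail_mean_eq[OF crit])
  then have "GW_q p r * ?S \<le> GW_q p r * (1 - (\<Sum>k<r. real k * pmf p k))"
    by (rule mult_left_mono[OF _ GW_q_nonneg])
  also have "\<dots> \<le> pmf p r * GW_H p r ^ r"
    using power_sum_diff_lower_bound[of "GW_H p (r - 1)" "GW_H p r" "pmf p" r,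
        OF GW_H_nonneg GW_H_pred_le GW_H_le_1 pmf_nonneg]
      GW_q_fixpoint_gap[OF \<open>1 \<le> r\<close>]
    by (simp add: GW_q_eq_diff[OF \<open>1 \<le> r\<close>])
  also have "\<dots> \<le> pmf p r"
    by (simp add: mult_left_le power_le_one GW_H_nonneg GW_H_le_1)
  finally show ?thesis using tail_mean_pos[OF crit unb, of r] by (simp add: field_simps)
qed

lemma GW_Hbar_le_Fbar_div_tail_mean:
  assumes crit: "(\<lambda>k. real k * pmf p k) sums 1" and unb: "infinite {r. pmf p r > 0}"
  shows "GW_Hbar p r \<le> Fbar p r / (\<Sum>\<^sub>\<infinity>i\<in>{r<..}. real i * pmf p i)"
proof -
  have "GW_Hbar p r * (1 - (\<Sum>k<Suc r. real k * pmf p k)) \<le> Fbar p r"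
    using power_sum_diff_lower_bound[of "GW_H p r" 1 "pmf p" "Suc r",
        OF GW_H_nonneg GW_H_le_1 order_refl pmf_nonneg]
      GW_Hbar_fixpoint_gap[of p r]
    by (simp add: GW_Hbar_def del: sum.lessThan_Suc)
  then show ?thesis
    using tail_mean_pos[OF crit unb, of r] by (simp add: tail_mean_eq[OF crit] field_simps)
qed

lemma real_mult_GW_Hbar_le_1:
  assumes crit: "(\<lambda>k. real k * pmf p k) sums 1" and unb: "infinite {r. pmf p r > 0}"
  shows "real r * GW_Hbar p r \<le> 1"
proof -
  let ?S = "\<Sum>\<^sub>\<infinity>i\<in>{r<..}. real i * pmf p i"
  have "real r * GW_Hbar p r \<le> real r * Fbar p r / ?S"
    using GW_Hbar_le_Fbar_div_tail_mean[OF crit unb, of r] mult_left_mono by fastforce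
  also have "\<dots> \<le> 1"
    using real_mult_Fbar_le_tail_mean[OF crit, of r] tail_mean_pos[OF crit unb, of r] by simp
  finally show ?thesis .
qed

lemma GW_H_tendsto_1:
  assumes crit: "(\<lambda>k. real k * pmf p k) sums 1" and unb: "infinite {r. pmf p r > 0}"
  shows "(GW_H p \<longlongrightarrow> 1) sequentially"
proof (rule tendsto_sandwich)
  show "eventually (\<lambda>r. 1 - 1 / real r \<le> GW_H p r) sequentially"
    using eventually_gt_at_top[of 0]
  proof eventually_elim
    case (elim r)
    then show ?case
      using real_mult_GW_Hbar_le_1[OF crit unb, of r] by (simp add: GW_Hbar_def field_simps)
  qed
  show "eventually (\<lambda>r. GW_H p r \<le> 1) sequentially"
    by (simp add: GW_H_le_1)
  show "(\<lambda>r. 1 - 1 / real r) \<longlonglongrightarrow> 1"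
    using tendsto_diff[OF tendsto_const lim_1_over_n, of 1] by simp
qed simp

section \<open>Asymptotics\<close>

lemma GW_q_over_pmf_tendsto_infinity:
  assumes crit: "(\<lambda>k. real k * pmf p k) sums 1" and unb: "infinite {r. pmf p r > 0}"
  shows "filterlim (\<lambda>r. GW_q p r / pmf p r) at_top (sequentially \<sqinter> principal {r. pmf p r > 0})"
  unfolding filterlim_at_top
proof
  fix Z :: real
  define M where "M = max Z 1"
  define e where "e = exp (-2) / M"
  have M: "Z \<le> M" "1 \<le> M" by (simp_all add: M_def)
  have "((\<lambda>r. GW_H p (r - 1)) \<longlongrightarrow> 1) sequentially"
    using filterlim_compose[OF GW_H_tendsto_1[OF crit unb] filterlim_minus_const_nat_at_top] .
  then have "eventually (\<lambda>r. 1 - e < (\<Sum>k<r. real k * pmf p k * GW_H p (r - 1) ^ k)) sequentially"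
    by (intro eventually_less_truncated_mean[OF crit])
      (use M in \<open>auto simp: e_def filterlim_ident GW_H_nonneg\<close>)
  then have "eventually (\<lambda>r. pmf p r > 0 \<longrightarrow> Z \<le> GW_q p r / pmf p r) sequentially"
    using eventually_ge_at_top[of 2]
  proof eventually_elim
    case (elim r)
    let ?a = "GW_H p (r - 1)" and ?b = "GW_H p r"
    have r: "1 \<le> r" using elim by simp
    have "pmf p r * ?b ^ r \<le> GW_q p r * (1 - (\<Sum>k<r. real k * pmf p k * ?a ^ k))"
      using power_sum_diff_upper_bound[of ?a ?b "pmf p" r, OF GW_H_nonneg GW_H_pred_le GW_H_le_1 pmf_nonneg]
        GW_q_fixpoint_gap[OF r]
      by (simp add: GW_q_eq_diff[OF r])
    also have "\<dots> \<le> GW_q p r * e"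
      using elim by (intro mult_left_mono GW_q_nonneg) simp
    finally have upper: "pmf p r * ?b ^ r \<le> GW_q p r * e" .
    have "exp (-2) \<le> ?b ^ r"
      using exp_minus_two_le_power[of "GW_Hbar p r" r] real_mult_GW_Hbar_le_1[OF crit unb, of r]
        elim GW_H_le_1[of p r] by (simp add: GW_Hbar_def)
    then have "pmf p r * exp (-2) \<le> GW_q p r * e"
      using upper mult_left_mono[of "exp (-2)" "?b ^ r" "pmf p r"] by simp
    then have "0 < pmf p r \<Longrightarrow> M \<le> GW_q p r / pmf p r"
      using M by (simp add: e_def field_simps)
    then show ?case using M by auto
  qed
  then show "eventually (\<lambda>r. Z \<le> GW_q p r / pmf p r) (sequentially \<sqinter> principal {r. pmf p r > 0})"
    by (simp add: eventually_inf_principal)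
qed

lemma GW_Hbar_over_Fbar_tendsto_infinity:
  assumes crit: "(\<lambda>k. real k * pmf p k) sums 1" and unb: "infinite {r. pmf p r > 0}"
  shows "filterlim (\<lambda>r. GW_Hbar p r / Fbar p r) at_top sequentially"
  unfolding filterlim_at_top
proof
  fix Z :: real
  define M where "M = max Z 1"
  define e where "e = 1 / M"
  have M: "Z \<le> M" "1 \<le> M" by (simp_all add: M_def)
  have "eventually (\<lambda>r. 1 - e < (\<Sum>k<Suc r. real k * pmf p k * GW_H p r ^ k)) sequentially"
    by (intro eventually_less_truncated_mean[OF crit] GW_H_tendsto_1[OF crit unb])
      (use M in \<open>auto simp: e_def filterlim_Suc GW_H_nonneg simp del: sum.lessThan_Suc\<close>)
  then show "eventually (\<lambda>r. Z \<le> GW_Hbar p r / Fbar p r) sequentially"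
  proof eventually_elim
    case (elim r)
    have "Fbar p r \<le> GW_Hbar p r * (1 - (\<Sum>k<Suc r. real k * pmf p k * GW_H p r ^ k))"
      using power_sum_diff_upper_bound[of "GW_H p r" 1 "pmf p" "Suc r",
          OF GW_H_nonneg GW_H_le_1 order_refl pmf_nonneg]
        GW_Hbar_fixpoint_gap[of p r]
      by (simp add: GW_Hbar_def del: sum.lessThan_Suc)
    also have "\<dots> \<le> GW_Hbar p r * e"
      using elim GW_H_le_1[of p r] by (intro mult_left_mono) (auto simp: GW_Hbar_def)
    finally have "Fbar p r \<le> GW_Hbar p r * e" .
    with Fbar_pos[OF unb, of r] M have "M \<le> GW_Hbar p r / Fbar p r"
      by (simp add: e_def field_simps)
    then show ?case using M by simp
  qed
qed

lemma GW_q_square_over_pmf_limsup: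
  assumes crit: "(\<lambda>k. real k * pmf p k) sums 1" and unb: "infinite {r. pmf p r > 0}"
  shows "Limsup (sequentially \<sqinter> principal {r. pmf p r > 0}) (\<lambda>r. ereal ((GW_q p r)\<^sup>2 / pmf p r))
    \<le> 2 / variance_ext p"
proof (rule ereal_le_two_divide_if_below[OF variance_ext_nonneg])
  fix c :: real assume "0 < c" "ereal c < variance_ext p"
  have "((\<lambda>r. GW_H p (r - 1)) \<longlongrightarrow> 1) sequentially"
    using filterlim_compose[OF GW_H_tendsto_1[OF crit unb] filterlim_minus_const_nat_at_top] .
  then have "eventually (\<lambda>r. c < (\<Sum>k<r. real k * (real k - 1) * pmf p k * GW_H p (r - 1) ^ k))
      sequentially"
    using \<open>ereal c < variance_ext p\<close>
    by (intro eventually_less_truncated_factorial_moment[OF crit])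
      (auto simp: filterlim_ident GW_H_nonneg)
  then have "eventually (\<lambda>r. pmf p r > 0 \<longrightarrow> (GW_q p r)\<^sup>2 / pmf p r \<le> 2 / c) sequentially"
    using eventually_ge_at_top[of 1]
  proof eventually_elim
    case (elim r)
    let ?a = "GW_H p (r - 1)" and ?b = "GW_H p r"
    have "(GW_q p r)\<^sup>2 / 2 * (\<Sum>k<r. real k * (real k - 1) * pmf p k * ?a ^ k) \<le> pmf p r * ?b ^ r"
      using power_sum_diff_second_order_bound[of ?a ?b "pmf p" r,
          OF GW_H_nonneg GW_H_pred_le GW_H_le_1 pmf_nonneg sum_lessThan_le_1_of_sums[OF crit]]
        GW_q_fixpoint_gap[of r p] elim
      by (simp add: GW_q_eq_diff)
    also have "\<dots> \<le> pmf p r"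
      by (simp add: mult_left_le power_le_one GW_H_nonneg GW_H_le_1)
    finally show ?case
      using square_divide_le_two_divide[OF \<open>0 < c\<close> less_imp_le] elim by blast
  qed
  then show "Limsup (sequentially \<sqinter> principal {r. pmf p r > 0}) (\<lambda>r. ereal ((GW_q p r)\<^sup>2 / pmf p r))
      \<le> ereal (2 / c)"
    by (intro Limsup_bounded) (simp add: eventually_inf_principal)
qed

lemma GW_Hbar_square_over_Fbar_limsup:
  assumes crit: "(\<lambda>k. real k * pmf p k) sums 1" and unb: "infinite {r. pmf p r > 0}"
  shows "limsup (\<lambda>r. ereal ((GW_Hbar p r)\<^sup>2 / Fbar p r)) \<le> 2 / variance_ext p"
proof (rule ereal_le_two_divide_if_below[OF variance_ext_nonneg])
  fix c :: real assume "0 < c" "ereal c < variance_ext p"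
  have "eventually (\<lambda>r. c < (\<Sum>k<Suc r. real k * (real k - 1) * pmf p k * GW_H p r ^ k)) sequentially"
    using \<open>ereal c < variance_ext p\<close>
    by (intro eventually_less_truncated_factorial_moment[OF crit] GW_H_tendsto_1[OF crit unb])
      (auto simp: filterlim_Suc GW_H_nonneg simp del: sum.lessThan_Suc)
  then have "eventually (\<lambda>r. (GW_Hbar p r)\<^sup>2 / Fbar p r \<le> 2 / c) sequentially"
  proof eventually_elim
    case (elim r)
    have "(GW_Hbar p r)\<^sup>2 / 2 * (\<Sum>k<Suc r. real k * (real k - 1) * pmf p k * GW_H p r ^ k)
        \<le> Fbar p r"
      using power_sum_diff_second_order_bound[of "GW_H p r" 1 "pmf p" "Suc r",
          OF GW_H_nonneg GW_H_le_1 order_refl pmf_nonneg sum_lessThan_le_1_of_sums[OF crit]]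
        GW_Hbar_fixpoint_gap[of p r]
      by (simp add: GW_Hbar_def del: sum.lessThan_Suc)
    then show ?case
      using square_divide_le_two_divide[OF \<open>0 < c\<close> less_imp_le[OF elim] Fbar_pos[OF unb]] by simp
  qed
  then show "limsup (\<lambda>r. ereal ((GW_Hbar p r)\<^sup>2 / Fbar p r)) \<le> ereal (2 / c)"
    by (intro Limsup_bounded) simp
qed

theorem theorem2p8:
  fixes p :: "nat pmf"
  assumes critical: "(\<lambda>k. real k * pmf p k) sums 1"
    and unbounded: "infinite {r. pmf p r > 0}"
  shows "filterlim (\<lambda>r. GW_q p r / pmf p r) at_top
           (sequentially \<sqinter> principal {r. pmf p r > 0})
       \<and> (\<forall>r\<ge>1. GW_q p r \<le> pmf p r / (\<Sum>\<^sub>\<infinity>i\<in>{r<..}. real i * pmf p i))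
       \<and> Limsup (sequentially \<sqinter> principal {r. pmf p r > 0})
           (\<lambda>r. ereal ((GW_q p r)\<^sup>2 / pmf p r)) \<le> 2 / variance_ext p
       \<and> filterlim (\<lambda>r. GW_Hbar p r / Fbar p r) at_top sequentially
       \<and> (\<forall>r\<ge>1. GW_Hbar p r \<le> Fbar p r / (\<Sum>\<^sub>\<infinity>i\<in>{r<..}. real i * pmf p i))
       \<and> limsup (\<lambda>r. ereal ((GW_Hbar p r)\<^sup>2 / Fbar p r)) \<le> 2 / variance_ext p"
  using GW_q_over_pmf_tendsto_infinity[OF critical unbounded] GW_q_le_pmf_div_tail_mean[OF critical unbounded]
    GW_q_square_over_pmf_limsup[OF critical unbounded]
    GW_Hbar_over_Fbar_tendsto_infinity[OF critical unbounded] GW_Hbar_le_Fbar_div_tail_mean[OF critical unbounded]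
    GW_Hbar_square_over_Fbar_limsup[OF critical unbounded]
  by blast

end
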